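(* Let $E$ be a separable real Hilbert space, let $0<p<\infty$ be such that $p$ is not an even integer, and let $k=\lceil p/2\rceil$. Then for every $x\in E$, $$\lim_{h\to 0}\frac{\sum_{j=0}^{2k}\binom{2k}{j}(-1)^j\|x+(k-j)h\|^p}{\Big(\sum_{j=0}^{2k}\binom{2k}{j}(-1)^j|k-j|^p\Big)\|h\|^p}=\chi_{\{0\}}(x),$$ where the limit is taken over $h\in E\setminus\{0\}$, $h\to 0$, and $\chi_{\{0\}}$ is the indicator function of $\{0\}$ (equal to $1$ at $x=0$ and $0$ otherwise). *)

theory Defs
  imports "HOL-Analysis.Analysis"
begin

end

theory Submission
  imports Defs
begin

(*
  Write D_k f = (SUM j = 0..2k. (-1)^j (2k choose j) f(k - j)) for the central difference of
  order 2k and unit step at 0; the quotient is D_k (t -> ||x + t h||^p) / (D_k |t|^p * ||h||^p).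

  For x = 0 the numerator is homogeneous of degree p in h and the quotient is identically 1.
  For x <> 0, ||x + t h||^p = (||x||^2 + s)^(p/2) with s = 2 t <x,h> + t^2 ||h||^2, a function
  smooth near s = 0 composed with a quadratic in t whose coefficients are O(||h||).  Since D_k
  annihilates polynomials of degree < 2k, Taylor expansion to order 2k gives a numerator of size
  O(||h||^(2k)), and the quotient is O(||h||^(2k - p)), which tends to 0 because p < 2k.

  The denominator is nonzero: as a function of q, D_k |t|^q = (SUM m = 1..k. a_m m^q) is an
  exponential sum with k distinct frequencies ln m, hence by repeated use of Rolle's theorem it has
  at most k - 1 real zeros.  These are already q = 2, 4, ..., 2k - 2 (where |t|^q is a polynomial of
  degree < 2k), so it cannot vanish at q = p, which is not an even integer.
*)

section \<open>Central differences\<close>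

lemma alternating_binomial_sum_Suc:
  fixes f :: "nat \<Rightarrow> 'a::comm_ring_1"
  shows "(\<Sum>j\<le>Suc n. of_nat (Suc n choose j) * (-1)^j * f j) =
         (\<Sum>j\<le>n. of_nat (n choose j) * (-1)^j * (f j - f (Suc j)))"
proof -
  have "(\<Sum>j\<le>Suc n. of_nat (Suc n choose j) * (-1)^j * f j)
      = f 0 + (\<Sum>j\<le>n. of_nat (n choose j) * (-1)^(Suc j) * f (Suc j))
        + (\<Sum>j\<le>n. of_nat (n choose Suc j) * (-1)^(Suc j) * f (Suc j))"
    by (simp add: sum.atMost_Suc_shift sum_subtractf sum_negf algebra_simps del: sum.atMost_Suc)
  also have "(\<Sum>j\<le>n. of_nat (n choose Suc j) * (-1)^(Suc j) * f (Suc j))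
      = (\<Sum>j\<le>Suc n. of_nat (n choose j) * (-1)^j * f j) - f 0"
    by (subst sum.atMost_Suc_shift) simp
  also have "(\<Sum>j\<le>Suc n. of_nat (n choose j) * (-1)^j * f j) = (\<Sum>j\<le>n. of_nat (n choose j) * (-1)^j * f j)"
    by (simp add: binomial_eq_0)
  finally show ?thesis
    by (simp add: sum_subtractf sum_negf algebra_simps del: sum.atMost_Suc)
qed

lemma alternating_binomial_sum_power:
  fixes a :: "'a::comm_ring_1"
  assumes "d < n"
  shows "(\<Sum>j\<le>n. of_nat (n choose j) * (-1)^j * (a + of_nat j)^d) = 0"
  using assms
proof (induction n arbitrary: d)
  case 0
  then show ?case by simp
next
  case (Suc n)
  have step: "(a + of_nat j)^d - (a + of_nat (Suc j))^d = - (\<Sum>e<d. of_nat (d choose e) * (a + of_nat j)^e)"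
    for j
    using binomial_ring[of "a + of_nat j" 1 d]
    by (simp add: lessThan_Suc_atMost[symmetric] algebra_simps)
  have "(\<Sum>j\<le>Suc n. of_nat (Suc n choose j) * (-1)^j * (a + of_nat j)^d)
      = - (\<Sum>e<d. of_nat (d choose e) * (\<Sum>j\<le>n. of_nat (n choose j) * (-1)^j * (a + of_nat j)^e))"
    unfolding alternating_binomial_sum_Suc step
    by (simp add: sum_distrib_left sum_negf algebra_simps sum.swap[of _ "{..<d}"])
  also have "\<dots> = 0"
    using Suc by simp
  finally show ?case .
qed

definition central_difference :: "nat \<Rightarrow> (real \<Rightarrow> real) \<Rightarrow> real" where
  "central_difference k f = (\<Sum>j=0..2*k. real (2*k choose j) * (-1)^j * f (real k - real j))"

lemma central_difference_add:
  "central_difference k (\<lambda>t. f t + g t) = central_difference k f + central_difference k g"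
  by (simp add: central_difference_def sum.distrib algebra_simps)

lemma central_difference_cmult:
  "central_difference k (\<lambda>t. c * f t) = c * central_difference k f"
  by (simp add: central_difference_def sum_distrib_left algebra_simps)

lemma central_difference_sum:
  "central_difference k (\<lambda>t. \<Sum>i\<in>I. f i t) = (\<Sum>i\<in>I. central_difference k (f i))"
  unfolding central_difference_def sum_distrib_left by (subst sum.swap) (simp add: algebra_simps)

lemma abs_central_difference_le:
  assumes "\<And>t. \<bar>t\<bar> \<le> real k \<Longrightarrow> \<bar>f t\<bar> \<le> B"
  shows "\<bar>central_difference k f\<bar> \<le> 4^k * B"
proof -
  have "\<bar>central_difference k f\<bar> \<le> (\<Sum>j=0..2*k. real (2*k choose j) * \<bar>f (real k - real j)\<bar>)"
    unfolding central_difference_def by (rule order_trans[OF sum_abs]) (simp add: abs_mult)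
  also have "\<dots> \<le> (\<Sum>j=0..2*k. real (2*k choose j) * B)"
    by (intro sum_mono mult_left_mono assms) auto
  also have "\<dots> = 4^k * B"
    using choose_row_sum[of "2*k"]
    by (simp add: sum_distrib_right[symmetric] atLeast0AtMost power_mult flip: of_nat_sum)
  finally show ?thesis .
qed

lemma central_difference_power:
  assumes "d < 2*k"
  shows "central_difference k (\<lambda>t. t^d) = 0"
proof -
  have "central_difference k (\<lambda>t. t^d)
     = (-1)^d * (\<Sum>j\<le>2*k. of_nat (2*k choose j) * (-1)^j * (- real k + of_nat j)^d)"
    unfolding central_difference_def atLeast0AtMost sum_distrib_left
    by (intro sum.cong refl) (simp add: power_mult_distrib[symmetric])
  also have "\<dots> = 0"
    using alternating_binomial_sum_power[OF assms, where a = "- real k"] by simp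
  finally show ?thesis .
qed

lemma central_difference_even:
  assumes "\<And>t. f (-t) = f t"
  shows "central_difference k f = (-1)^k * real (2*k choose k) * f 0
           + 2 * (\<Sum>m=1..k. (-1)^(k+m) * real (2*k choose (k+m)) * f (real m))"
proof -
  define g where "g j = real (2*k choose j) * (-1)^j * f (real k - real j)" for j
  have split: "{0..2*k} = {0..<k} \<union> {k} \<union> {1+k..k+k}" by auto
  have lower: "g (k - m) = (-1)^(k+m) * real (2*k choose (k+m)) * f (real m)" if "m \<in> {1..k}" for m
  proof -
    have "2*k choose (k - m) = 2*k choose (k + m)"
      using that binomial_symmetric[of "k - m" "2*k"] by (simp add: numeral_2_eq_2)
    moreover have "(-1::real)^(k+m) = (-1)^(k-m)"
      using that by (simp add: minus_one_power_iff)
    ultimately show ?thesis using that unfolding g_def by (simp add: of_nat_diff)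
  qed
  have upper: "g (m + k) = (-1)^(k+m) * real (2*k choose (k+m)) * f (real m)" for m
    using assms[of "real m"] unfolding g_def by (simp add: add.commute)
  have "central_difference k f = (\<Sum>j\<in>{0..<k}. g j) + g k + (\<Sum>j=1+k..k+k. g j)"
    unfolding central_difference_def g_def[symmetric] split
    by (subst sum.union_disjoint; auto)+
  also have "\<dots> = (\<Sum>m=1..k. g (k - m)) + g k + (\<Sum>m=1..k. g (m + k))"
    using sum.shift_bounds_cl_nat_ivl[of g 1 k k]
    by (simp add: sum.atLeastLessThan_rev_at_least_Suc_atMost)
  also have "(\<Sum>m=1..k. g (k - m)) = (\<Sum>m=1..k. (-1)^(k+m) * real (2*k choose (k+m)) * f (real m))"
    using lower by (rule sum.cong[OF refl])
  also have "(\<Sum>m=1..k. g (m + k)) = (\<Sum>m=1..k. (-1)^(k+m) * real (2*k choose (k+m)) * f (real m))"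
    unfolding upper ..
  finally show ?thesis
    by (simp add: g_def)
qed

section \<open>The normalising constant is nonzero\<close>

lemma Rolle_card_zeros:
  fixes g g' :: "real \<Rightarrow> real"
  assumes der: "\<And>t. (g has_real_derivative g' t) (at t)"
    and "finite Z" "card Z = Suc m" "\<forall>z\<in>Z. g z = 0"
  shows "\<exists>W. finite W \<and> card W = m \<and> (\<forall>w\<in>W. g' w = 0) \<and> W \<subseteq> {Min Z<..<Max Z}"
  using assms(2-4)
proof (induction m arbitrary: Z)
  case 0
  then show ?case by (intro exI[of _ "{}"]) auto
next
  case (Suc m)
  define z where "z = Max Z"
  define Z' where "Z' = Z - {z}"
  have "Z \<noteq> {}" using Suc.prems by auto
  then have z: "z \<in> Z" "\<forall>y\<in>Z'. y < z"
    using Suc.prems(1) unfolding z_def Z'_def by (auto simp: order.not_eq_order_implies_strict)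
  have Z': "finite Z'" "card Z' = Suc m" "Z' \<subseteq> Z"
    using Suc.prems z(1) unfolding Z'_def by (auto simp: card_Diff_singleton)
  then have "Z' \<noteq> {}" by auto
  obtain W where W: "finite W" "card W = m" "\<forall>w\<in>W. g' w = 0" "W \<subseteq> {Min Z'<..<Max Z'}"
    using Suc.IH[OF Z'(1,2)] Suc.prems(3) Z'(3) by blast
  have "Max Z' < z" using z(2) Z' \<open>Z' \<noteq> {}\<close> by auto
  moreover have "g (Max Z') = g z"
    using Suc.prems(3) z(1) Max_in[OF Z'(1) \<open>Z' \<noteq> {}\<close>] Z'(3) by auto
  ultimately obtain w where w: "Max Z' < w" "w < z" "(g has_real_derivative 0) (at w)"
    using Rolle[of "Max Z'" z g] der
    by (metis DERIV_continuous_on has_field_derivative_at_within real_differentiable_def)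
  have "g' w = 0" using w(3) der DERIV_unique by blast
  moreover have "w \<notin> W" using W(4) w(1) by auto
  moreover have "{Min Z'<..<Max Z'} \<union> {Max Z'<..<z} \<subseteq> {Min Z<..<Max Z}"
    using \<open>Max Z' < z\<close> Min_antimono[OF Z'(3) \<open>Z' \<noteq> {}\<close>] Suc.prems(1)
      Max_ge[OF Z'(1) Min_in[OF Z'(1) \<open>Z' \<noteq> {}\<close>]] by (auto simp: z_def)
  ultimately show ?case
    using W w by (intro exI[of _ "insert w W"]) auto
qed

lemma has_real_derivative_exp_sum:
  "((\<lambda>z. \<Sum>i\<in>I. a i * exp (lam i * z)) has_real_derivative (\<Sum>i\<in>I. a i * lam i * exp (lam i * z))) (at z)"
  by (auto intro!: derivative_eq_intros sum.cong)

lemma exp_sum_Rolle_step: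
  fixes a lam :: "'i \<Rightarrow> real"
  assumes "finite I" "i\<^sub>1 \<in> I"
    and "finite Z" "card Z = Suc m" "\<forall>z\<in>Z. (\<Sum>i\<in>I. a i * exp (lam i * z)) = 0"
  shows "\<exists>W. finite W \<and> card W = m \<and>
    (\<forall>w\<in>W. (\<Sum>i\<in>I - {i\<^sub>1}. a i * (lam i - lam i\<^sub>1) * exp ((lam i - lam i\<^sub>1) * w)) = 0)"
proof -
  define g where "g z = (\<Sum>i\<in>I. a i * exp ((lam i - lam i\<^sub>1) * z))" for z
  define g' where "g' z = (\<Sum>i\<in>I - {i\<^sub>1}. a i * (lam i - lam i\<^sub>1) * exp ((lam i - lam i\<^sub>1) * z))" for z
  have "g z = exp (- lam i\<^sub>1 * z) * (\<Sum>i\<in>I. a i * exp (lam i * z))" for z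
    unfolding g_def sum_distrib_left by (intro sum.cong refl) (simp add: algebra_simps flip: exp_add)
  then have zeros: "\<forall>z\<in>Z. g z = 0"
    using assms(5) by simp
  have deriv: "(g has_real_derivative g' t) (at t)" for t
  proof -
    have "(\<Sum>i\<in>I. a i * (lam i - lam i\<^sub>1) * exp ((lam i - lam i\<^sub>1) * t)) = g' t"
      unfolding g'_def using assms(1,2) by (intro sum.mono_neutral_right) auto
    with has_real_derivative_exp_sum[of a "\<lambda>i. lam i - lam i\<^sub>1" I t] show ?thesis
      unfolding g_def[abs_def] by simp
  qed
  obtain W where "finite W" "card W = m" "\<forall>w\<in>W. g' w = 0"
    using Rolle_card_zeros[OF deriv assms(3,4) zeros] by blast
  then show ?thesis
    unfolding g'_def by blast
qed

lemma exp_sum_card_zeros_less: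
  fixes a lam :: "'i \<Rightarrow> real"
  assumes "finite I" "inj_on lam I" "i\<^sub>0 \<in> I" "a i\<^sub>0 \<noteq> 0"
    and "finite Z" "\<forall>z\<in>Z. (\<Sum>i\<in>I. a i * exp (lam i * z)) = 0"
  shows "card Z < card I"
  using assms
proof (induction I arbitrary: a lam i\<^sub>0 Z rule: finite_remove_induct)
  case empty
  then show ?case by simp
next
  case (remove I)
  show ?case
  proof (cases "I = {i\<^sub>0}")
    case True
    then have "Z = {}" using remove.prems by auto
    then show ?thesis using True by simp
  next
    case False
    then obtain i\<^sub>1 where i\<^sub>1: "i\<^sub>1 \<in> I" "i\<^sub>1 \<noteq> i\<^sub>0" using remove.prems(2) by blast
    have card_I: "card I = Suc (card (I - {i\<^sub>1}))"
      using card_Suc_Diff1[OF remove.hyps(1) i\<^sub>1(1)] by simp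
    show ?thesis
    proof (rule ccontr)
      assume "\<not> card Z < card I"
      then obtain Z' where Z': "Z' \<subseteq> Z" "card Z' = Suc (card (I - {i\<^sub>1}))"
        using card_I by (metis not_less obtain_subset_with_card_n)
      have "finite Z'" "\<forall>z\<in>Z'. (\<Sum>i\<in>I. a i * exp (lam i * z)) = 0"
        using Z'(1) remove.prems(4,5) finite_subset by blast+
      then obtain W where W: "finite W" "card W = card (I - {i\<^sub>1})"
        "\<forall>w\<in>W. (\<Sum>i\<in>I - {i\<^sub>1}. a i * (lam i - lam i\<^sub>1) * exp ((lam i - lam i\<^sub>1) * w)) = 0"
        using exp_sum_Rolle_step[OF remove.hyps(1) i\<^sub>1(1) _ Z'(2)] by blast
      have "card W < card (I - {i\<^sub>1})"
      proof (rule remove.IH[OF i\<^sub>1(1), where a = "\<lambda>i. a i * (lam i - lam i\<^sub>1)"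
            and lam = "\<lambda>i. lam i - lam i\<^sub>1" and i\<^sub>0 = i\<^sub>0 and Z = W])
        show "inj_on (\<lambda>i. lam i - lam i\<^sub>1) (I - {i\<^sub>1})"
          using remove.prems(1) by (auto simp: inj_on_def)
        show "a i\<^sub>0 * (lam i\<^sub>0 - lam i\<^sub>1) \<noteq> 0"
          using remove.prems(1-3) i\<^sub>1 by (auto dest: inj_onD)
      qed (use i\<^sub>1 W remove.prems(2) in auto)
      then show False using W(2) by simp
    qed
  qed
qed

lemma abs_powr_even_nat:
  assumes "0 < n"
  shows "\<bar>t\<bar> powr (2 * real n) = t^(2*n)"
proof (cases "t = 0")
  case False
  then have "\<bar>t\<bar> powr real (2*n) = \<bar>t\<bar>^(2*n)" by (intro powr_realpow) auto
  then show ?thesis by (simp add: power_even_abs)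
qed (use assms in simp)

lemma central_difference_abs_powr_neq_0:
  assumes "1 \<le> k" "\<forall>i\<in>{1..<k}. p \<noteq> 2 * real i"
  shows "central_difference k (\<lambda>t. \<bar>t\<bar> powr p) \<noteq> 0"
proof
  assume vanish: "central_difference k (\<lambda>t. \<bar>t\<bar> powr p) = 0"
  define a where "a m = 2 * (-1)^(k+m) * real (2*k choose (k+m))" for m
  \<comment> \<open>the middle term j = k drops out because \<open>0 powr q = 0\<close> for every q\<close>
  have exp_sum: "central_difference k (\<lambda>t. \<bar>t\<bar> powr q) = (\<Sum>m\<in>{1..k}. a m * exp (ln (real m) * q))" for q
    by (subst central_difference_even) (auto simp: a_def powr_def sum_distrib_left mult_ac intro!: sum.cong)
  define Z where "Z = insert p ((\<lambda>i. 2 * real i) ` {1..<k})"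
  have "card ((\<lambda>i. 2 * real i) ` {1..<k}) = k - 1"
    by (simp add: card_image inj_on_def)
  moreover have "p \<notin> (\<lambda>i. 2 * real i) ` {1..<k}"
    using assms(2) by auto
  ultimately have "card Z = k"
    using assms(1) unfolding Z_def by simp
  moreover have "card Z < card {1..k}"
  proof (rule exp_sum_card_zeros_less)
    show "inj_on (\<lambda>m. ln (real m)) {1..k}"
      by (auto simp: inj_on_def)
    show "a k \<noteq> 0"
      by (simp add: a_def flip: mult_2)
    show "\<forall>z\<in>Z. (\<Sum>m\<in>{1..k}. a m * exp (ln (real m) * z)) = 0"
    proof
      fix z assume "z \<in> Z"
      then consider "z = p" | i where "i \<in> {1..<k}" "z = 2 * real i" unfolding Z_def by auto
      then show "(\<Sum>m\<in>{1..k}. a m * exp (ln (real m) * z)) = 0"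
      proof cases
        case 1
        then show ?thesis using vanish exp_sum by simp
      next
        case 2
        then have "central_difference k (\<lambda>t. \<bar>t\<bar> powr z) = central_difference k (\<lambda>t. t^(2*i))"
          by (simp add: abs_powr_even_nat)
        also have "\<dots> = 0"
          using 2 by (intro central_difference_power) auto
        finally show ?thesis using exp_sum by simp
      qed
    qed
  qed (use assms in \<open>auto simp: Z_def\<close>)
  ultimately show False by simp
qed

section \<open>Central differences of smooth functions of a quadratic\<close>

lemma powr_le_add_powr_endpoints:
  fixes x :: real
  assumes "0 < a" "a \<le> x" "x \<le> b"
  shows "x powr r \<le> a powr r + b powr r"
proof (cases "r \<ge> 0")
  case True
  then have "x powr r \<le> b powr r"
    using assms by (intro powr_mono2) auto
  then show ?thesis by (simp add: add_increasing)
next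
  case False
  then have "x powr r \<le> a powr r"
    using assms by (intro powr_mono2') auto
  then show ?thesis by (simp add: add_increasing2)
qed

lemma powr_Taylor_bound:
  fixes A q :: real
  assumes A: "A > 0"
  shows "\<exists>K c. \<forall>s. \<bar>s\<bar> \<le> A/2 \<longrightarrow> \<bar>(A + s) powr q - (\<Sum>r<R. c r * s^r)\<bar> \<le> K * \<bar>s\<bar>^R"
proof -
  define P where "P m = (\<Prod>i<m. q - real i)" for m
  define D where "D m t = P m * (A + t) powr (q - real m)" for m t
  define K where "K = \<bar>P R\<bar> * ((A/2) powr (q - real R) + (3*A/2) powr (q - real R)) / fact R"
  have D_deriv: "(D m has_real_derivative D (Suc m) t) (at t)" if "A + t > 0" for m t
  proof -
    have "((\<lambda>t. (A + t) powr (q - real m)) has_real_derivative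
        (q - real m) * (A + t) powr (q - real m - of_nat 1) * 1) (at t)"
      by (rule DERIV_fun_powr) (auto intro!: derivative_eq_intros that)
    from DERIV_cmult[OF this, of "P m"] show ?thesis
      unfolding D_def by (simp add: P_def algebra_simps)
  qed
  have "\<bar>(A + s) powr q - (\<Sum>r<R. D r 0 / fact r * s^r)\<bar> \<le> K * \<bar>s\<bar>^R" if s: "\<bar>s\<bar> \<le> A/2" for s
  proof -
    obtain t where t: "\<bar>t\<bar> \<le> \<bar>s\<bar>" "(A + s) powr q = (\<Sum>r<R. D r 0 / fact r * s^r) + D R t / fact R * s^R"
    proof (atomize_elim, rule Maclaurin_bi_le[of "D" "(\<lambda>s. (A + s) powr q)"])
      show "D 0 = (\<lambda>s. (A + s) powr q)" unfolding D_def P_def by auto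
      show "\<forall>m t. m < R \<and> \<bar>t\<bar> \<le> \<bar>s\<bar> \<longrightarrow> (D m has_real_derivative D (Suc m) t) (at t)"
        using s A by (auto intro!: D_deriv)
    qed
    have "(A + t) powr (q - real R) \<le> (A/2) powr (q - real R) + (3*A/2) powr (q - real R)"
      using t(1) s A by (intro powr_le_add_powr_endpoints) auto
    then have "\<bar>D R t\<bar> / fact R \<le> K"
      unfolding D_def K_def by (auto simp: abs_mult intro!: divide_right_mono mult_left_mono)
    moreover have "\<bar>(A + s) powr q - (\<Sum>r<R. D r 0 / fact r * s^r)\<bar> = \<bar>D R t\<bar> / fact R * \<bar>s\<bar>^R"
      using t(2) by (simp add: abs_mult power_abs)
    ultimately show ?thesis
      using mult_right_mono[of "\<bar>D R t\<bar> / fact R" K "\<bar>s\<bar>^R"] by simp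
  qed
  then show ?thesis
    by (intro exI[of _ K] exI[of _ "\<lambda>r. D r 0 / fact r"]) blast
qed

lemma central_difference_quadratic_power:
  "central_difference k (\<lambda>t. (a*t + b*t^2)^r)
     = (\<Sum>l\<le>r. real (r choose l) * b^l * a^(r-l) * central_difference k (\<lambda>t. t^(r+l)))"
proof -
  have "(a*t + b*t^2)^r = (\<Sum>l\<le>r. real (r choose l) * b^l * a^(r-l) * t^(r+l))" for t
  proof -
    have "(a*t + b*t^2)^r = (\<Sum>l\<le>r. real (r choose l) * (b*t^2)^l * (a*t)^(r-l))"
      using binomial_ring[of "b*t^2" "a*t" r] by (simp add: add.commute)
    also have "\<dots> = (\<Sum>l\<le>r. real (r choose l) * b^l * a^(r-l) * t^(r+l))"
    proof (intro sum.cong refl)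
      fix l assume "l \<in> {..r}"
      then have "t^(r+l) = (t^2)^l * t^(r-l)" by (simp add: add.commute flip: power_add power_mult)
      then show "real (r choose l) * (b*t^2)^l * (a*t)^(r-l) = real (r choose l) * b^l * a^(r-l) * t^(r+l)"
        by (simp add: power_mult_distrib power_mult mult_ac)
    qed
    finally show ?thesis .
  qed
  then show ?thesis
    by (simp add: central_difference_sum central_difference_cmult)
qed

lemma abs_central_difference_quadratic_power_le:
  assumes "\<bar>a\<bar> \<le> X * e" "\<bar>b\<bar> \<le> e^2" "0 \<le> X" "0 \<le> e" "e \<le> 1"
  shows "\<bar>central_difference k (\<lambda>t. (a*t + b*t^2)^r)\<bar>
    \<le> (\<Sum>l\<le>r. real (r choose l) * X^(r-l) * \<bar>central_difference k (\<lambda>t. t^(r+l))\<bar>) * e^(2*k)"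
proof -
  have "\<bar>b^l * a^(r-l) * central_difference k (\<lambda>t. t^(r+l))\<bar>
      \<le> X^(r-l) * \<bar>central_difference k (\<lambda>t. t^(r+l))\<bar> * e^(2*k)" if "l \<le> r" for l
  proof (cases "r + l < 2*k")
    case True
    then show ?thesis by (simp add: central_difference_power)
  next
    case False
    have "\<bar>b^l * a^(r-l)\<bar> \<le> (e^2)^l * (X*e)^(r-l)"
      unfolding abs_mult power_abs using assms by (intro mult_mono power_mono) auto
    also have "\<dots> = X^(r-l) * e^(r+l)"
      using that by (simp add: power_mult_distrib add.commute flip: power_mult power_add)
    also have "\<dots> \<le> X^(r-l) * e^(2*k)"
      using False assms by (intro mult_left_mono power_decreasing) auto
    finally have "\<bar>b^l * a^(r-l)\<bar> \<le> X^(r-l) * e^(2*k)" .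
    from mult_right_mono[OF this abs_ge_zero[of "central_difference k (\<lambda>t. t^(r+l))"]]
    show ?thesis by (simp add: abs_mult mult_ac)
  qed
  then have "(\<Sum>l\<le>r. \<bar>real (r choose l) * b^l * a^(r-l) * central_difference k (\<lambda>t. t^(r+l))\<bar>)
      \<le> (\<Sum>l\<le>r. real (r choose l) * (X^(r-l) * \<bar>central_difference k (\<lambda>t. t^(r+l))\<bar> * e^(2*k)))"
    by (intro sum_mono) (simp add: abs_mult mult.assoc mult_left_mono)
  then show ?thesis
    unfolding central_difference_quadratic_power
    by (intro order_trans[OF sum_abs]) (simp add: sum_distrib_left sum_distrib_right mult_ac)
qed

lemma abs_quadratic_le:
  fixes a b e t T X :: real
  assumes "\<bar>t\<bar> \<le> T" "\<bar>a\<bar> \<le> X * e" "\<bar>b\<bar> \<le> e^2" "0 \<le> e" "e \<le> 1"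
  shows "\<bar>a*t + b*t^2\<bar> \<le> (X * T + T^2) * e"
proof -
  have "0 \<le> T" "0 \<le> X * e"
    using assms(1,2) abs_ge_zero[of t] abs_ge_zero[of a] by linarith+
  then have "t^2 \<le> T^2"
    using assms(1) abs_le_square_iff[of t T] by simp
  have "\<bar>a*t + b*t^2\<bar> \<le> \<bar>a\<bar> * \<bar>t\<bar> + \<bar>b\<bar> * t^2"
    by (metis abs_mult abs_power2 abs_triangle_ineq)
  also have "\<dots> \<le> X * e * T + e^2 * T^2"
    using assms(1-3) \<open>0 \<le> X * e\<close> \<open>t^2 \<le> T^2\<close> by (intro add_mono mult_mono) auto
  also have "\<dots> \<le> (X * T + T^2) * e"
  proof -
    have "e^2 \<le> e" using assms(4,5) by (simp add: power2_eq_square mult_left_le_one_le)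
    then have "e^2 * T^2 \<le> e * T^2" by (simp add: mult_right_mono)
    then show ?thesis by (simp add: algebra_simps)
  qed
  finally show ?thesis .
qed

lemma central_difference_comp_quadratic_bound:
  fixes g :: "real \<Rightarrow> real" and c :: "nat \<Rightarrow> real"
  assumes approx: "\<And>s. \<bar>s\<bar> \<le> \<rho> \<Longrightarrow> \<bar>g s - (\<Sum>r<2*k. c r * s^r)\<bar> \<le> K * \<bar>s\<bar>^(2*k)"
    and X: "0 \<le> X"
  shows "\<exists>M. \<forall>a b e. \<bar>a\<bar> \<le> X * e \<longrightarrow> \<bar>b\<bar> \<le> e^2 \<longrightarrow> 0 \<le> e \<longrightarrow> e \<le> 1 \<longrightarrow>
    (X * real k + real k^2) * e \<le> \<rho> \<longrightarrow>
    \<bar>central_difference k (\<lambda>t. g (a*t + b*t^2))\<bar> \<le> M * e^(2*k)"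
proof -
  define L where "L = X * real k + real k^2"
  define Q where "Q r = (\<Sum>l\<le>r. real (r choose l) * X^(r-l) * \<bar>central_difference k (\<lambda>t. t^(r+l))\<bar>)" for r
  define M where "M = (\<Sum>r<2*k. \<bar>c r\<bar> * Q r) + 4^k * (\<bar>K\<bar> * L^(2*k))"
  have "\<bar>central_difference k (\<lambda>t. g (a*t + b*t^2))\<bar> \<le> M * e^(2*k)"
    if a: "\<bar>a\<bar> \<le> X * e" and b: "\<bar>b\<bar> \<le> e^2" and e: "0 \<le> e" "e \<le> 1" and \<rho>: "L * e \<le> \<rho>" for a b e
  proof -
    define q where "q t = a*t + b*t^2" for t
    define R where "R t = g (q t) - (\<Sum>r<2*k. c r * q t ^ r)" for t
    have "(\<lambda>t. g (q t)) = (\<lambda>t. (\<Sum>r<2*k. c r * q t ^ r) + R t)"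
      by (simp add: R_def)
    then have split: "central_difference k (\<lambda>t. g (q t))
        = (\<Sum>r<2*k. c r * central_difference k (\<lambda>t. q t ^ r)) + central_difference k R"
      by (simp add: central_difference_add central_difference_sum central_difference_cmult)
    have "\<bar>central_difference k (\<lambda>t. g (q t))\<bar>
        \<le> \<bar>\<Sum>r<2*k. c r * central_difference k (\<lambda>t. q t ^ r)\<bar> + \<bar>central_difference k R\<bar>"
      unfolding split by (rule abs_triangle_ineq)
    also have "\<dots> \<le> (\<Sum>r<2*k. \<bar>c r\<bar> * (Q r * e^(2*k))) + 4^k * (\<bar>K\<bar> * (L * e)^(2*k))"
    proof (rule add_mono)
      show "\<bar>\<Sum>r<2*k. c r * central_difference k (\<lambda>t. q t ^ r)\<bar> \<le> (\<Sum>r<2*k. \<bar>c r\<bar> * (Q r * e^(2*k)))"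
        unfolding q_def Q_def
        by (intro order_trans[OF sum_abs] sum_mono)
          (auto simp: abs_mult intro!: mult_left_mono abs_central_difference_quadratic_power_le a b e X)
      show "\<bar>central_difference k R\<bar> \<le> 4^k * (\<bar>K\<bar> * (L * e)^(2*k))"
      proof (rule abs_central_difference_le)
        fix t assume "\<bar>t\<bar> \<le> real k"
        then have "\<bar>q t\<bar> \<le> L * e"
          unfolding q_def L_def using a b e by (rule abs_quadratic_le)
        then have "\<bar>q t\<bar> \<le> \<rho>" "\<bar>q t\<bar>^(2*k) \<le> (L * e)^(2*k)"
          using \<rho> by (auto intro: power_mono)
        then show "\<bar>R t\<bar> \<le> \<bar>K\<bar> * (L * e)^(2*k)"
          unfolding R_def using approx
          by (meson abs_ge_self mult_mono order_trans abs_ge_zero zero_le_power)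
      qed
    qed
    also have "\<dots> = M * e^(2*k)"
      by (simp add: M_def sum_distrib_left sum_distrib_right power_mult_distrib algebra_simps)
    finally show ?thesis
      unfolding q_def .
  qed
  then show ?thesis
    unfolding L_def by blast
qed

lemma norm_add_scaleR_powr:
  fixes x h :: "'a::real_inner"
  shows "norm (x + t *\<^sub>R h) powr p = (norm x^2 + ((2 * inner x h) * t + norm h^2 * t^2)) powr (p/2)"
proof -
  have "norm (x + t *\<^sub>R h)^2 = inner (x + t *\<^sub>R h) (x + t *\<^sub>R h)"
    by (rule power2_norm_eq_inner)
  also have "\<dots> = inner x x + ((2 * inner x h) * t + inner h h * t^2)"
    by (simp add: inner_add inner_commute power2_eq_square algebra_simps)
  also have "\<dots> = norm x^2 + ((2 * inner x h) * t + norm h^2 * t^2)"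
    by (simp only: power2_norm_eq_inner)
  finally have square: "norm (x + t *\<^sub>R h)^2 = norm x^2 + ((2 * inner x h) * t + norm h^2 * t^2)" .
  have "norm y powr p = (norm y^2) powr (p/2)" for y :: 'a
  proof (cases "y = 0")
    case False
    have "norm y powr p = (norm y powr 2) powr (p/2)" by (simp only: powr_powr) simp
    also have "norm y powr 2 = norm y^2" using False by (simp add: powr_numeral)
    finally show ?thesis .
  qed simp
  then show ?thesis by (simp only: square)
qed

lemma central_difference_norm_powr_bound:
  fixes x :: "'a::real_inner"
  assumes "x \<noteq> 0"
  shows "\<exists>M. \<forall>\<^sub>F h in nhds 0.
    \<bar>central_difference k (\<lambda>t. norm (x + t *\<^sub>R h) powr p)\<bar> \<le> M * norm h^(2*k)"
proof -
  define A where "A = norm x^2"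
  define X where "X = 2 * norm x"
  define L where "L = X * real k + real k^2"
  have A: "A > 0" using assms by (simp add: A_def)
  obtain K c where Taylor:
    "\<And>s. \<bar>s\<bar> \<le> A/2 \<Longrightarrow> \<bar>(A + s) powr (p/2) - (\<Sum>r<2*k. c r * s^r)\<bar> \<le> K * \<bar>s\<bar>^(2*k)"
    using powr_Taylor_bound[OF A] by blast
  obtain M where M: "\<And>a b e. \<bar>a\<bar> \<le> X * e \<Longrightarrow> \<bar>b\<bar> \<le> e^2 \<Longrightarrow> 0 \<le> e \<Longrightarrow> e \<le> 1 \<Longrightarrow> L * e \<le> A/2 \<Longrightarrow>
      \<bar>central_difference k (\<lambda>t. (A + (a*t + b*t^2)) powr (p/2))\<bar> \<le> M * e^(2*k)"
    using central_difference_comp_quadratic_bound[where g = "\<lambda>s. (A + s) powr (p/2)" and \<rho> = "A/2" and X = X]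
      Taylor unfolding L_def X_def by fastforce
  define \<delta> where "\<delta> = min 1 (A/2 / (L + 1))"
  have L: "L \<ge> 0" by (simp add: L_def X_def)
  have bound: "\<bar>central_difference k (\<lambda>t. norm (x + t *\<^sub>R h) powr p)\<bar> \<le> M * norm h^(2*k)"
    if h: "norm h < \<delta>" for h
  proof -
    have "L * norm h \<le> (L + 1) * norm h" by (simp add: mult_right_mono)
    also have "\<dots> \<le> A/2"
      using h L A by (simp add: \<delta>_def field_simps)
    finally have "L * norm h \<le> A/2" .
    moreover have "\<bar>2 * inner x h\<bar> \<le> X * norm h"
      using Cauchy_Schwarz_ineq2[of x h] by (simp add: X_def)
    ultimately show ?thesis
      using M[where a = "2 * inner x h" and b = "norm h^2" and e = "norm h"] h
      by (simp add: norm_add_scaleR_powr A_def \<delta>_def)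
  qed
  have "\<delta> > 0"
    using A L by (simp add: \<delta>_def)
  then show ?thesis
    unfolding eventually_nhds_metric using bound
    by (intro exI[of _ M] exI[of _ \<delta>]) (simp add: dist_norm)
qed

lemma central_difference_norm_scaleR_powr:
  "central_difference k (\<lambda>t. norm (t *\<^sub>R h) powr p) = central_difference k (\<lambda>t. \<bar>t\<bar> powr p) * norm h powr p"
  using central_difference_cmult[of k "norm h powr p" "\<lambda>t. \<bar>t\<bar> powr p"]
  by (simp add: powr_mult mult.commute)

\<comment> \<open>No condition on C: for C = 0 the quotient is 0, by the convention x / 0 = 0.\<close>
lemma tendsto_zero_divide_norm_powr:
  fixes f :: "'a::real_normed_vector \<Rightarrow> real"
  assumes "\<forall>\<^sub>F h in at 0. \<bar>f h\<bar> \<le> M * norm h^n" and "p < real n"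
  shows "((\<lambda>h. f h / (C * norm h powr p)) \<longlongrightarrow> 0) (at 0)"
proof (rule Lim_null_comparison)
  have "\<forall>\<^sub>F h in at 0. h \<noteq> 0"
    by (simp add: eventually_at_filter)
  then show "\<forall>\<^sub>F h in at 0. norm (f h / (C * norm h powr p)) \<le> \<bar>M\<bar> / \<bar>C\<bar> * norm h powr (real n - p)"
    using assms(1)
  proof eventually_elim
    case (elim h)
    have "M * norm h^n \<le> \<bar>M\<bar> * norm h^n"
      by (intro mult_right_mono) auto
    then have "\<bar>f h\<bar> \<le> \<bar>M\<bar> * norm h^n"
      using elim(2) by linarith
    then have "\<bar>f h\<bar> \<le> \<bar>M\<bar> * norm h powr real n"
      using elim(1) by (simp add: powr_realpow)
    then have "\<bar>f h\<bar> / (\<bar>C\<bar> * norm h powr p) \<le> \<bar>M\<bar> * norm h powr real n / (\<bar>C\<bar> * norm h powr p)"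
      by (simp add: divide_right_mono)
    also have "\<dots> = \<bar>M\<bar> / \<bar>C\<bar> * norm h powr (real n - p)"
      using elim by (simp add: powr_diff)
    finally show ?case by (simp add: abs_mult)
  qed
  have "((\<lambda>h::'a. norm h powr (real n - p)) \<longlongrightarrow> 0) (at 0)"
    using assms(2) by (intro tendsto_zero_powrI tendsto_norm_zero tendsto_ident_at) auto
  from tendsto_mult[OF tendsto_const[of "\<bar>M\<bar> / \<bar>C\<bar>"] this]
  show "((\<lambda>h::'a. \<bar>M\<bar> / \<bar>C\<bar> * norm h powr (real n - p)) \<longlongrightarrow> 0) (at 0)"
    by simp
qed

lemma tendsto_central_difference_norm_scaleR_powr_quotient:
  assumes "central_difference k (\<lambda>t. \<bar>t\<bar> powr p) \<noteq> 0"
  shows "((\<lambda>h::'a::real_normed_vector. central_difference k (\<lambda>t. norm (t *\<^sub>R h) powr p)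
            / (central_difference k (\<lambda>t. \<bar>t\<bar> powr p) * norm h powr p)) \<longlongrightarrow> 1) (at 0)"
proof -
  have "\<forall>\<^sub>F h in at 0. central_difference k (\<lambda>t. norm (t *\<^sub>R h) powr p)
      / (central_difference k (\<lambda>t. \<bar>t\<bar> powr p) * norm h powr p) = 1"
    using assms by (simp add: eventually_at_filter central_difference_norm_scaleR_powr del: norm_scaleR)
  then show ?thesis
    by (rule tendsto_eventually)
qed

lemma tendsto_central_difference_norm_powr_quotient:
  fixes x :: "'a::real_inner"
  assumes "x \<noteq> 0" "p < real (2*k)"
  shows "((\<lambda>h. central_difference k (\<lambda>t. norm (x + t *\<^sub>R h) powr p) / (C * norm h powr p)) \<longlongrightarrow> 0) (at 0)"
proof -
  obtain M where "\<forall>\<^sub>F h in nhds 0. \<bar>central_difference k (\<lambda>t. norm (x + t *\<^sub>R h) powr p)\<bar> \<le> M * norm h^(2*k)"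
    using central_difference_norm_powr_bound[OF assms(1)] by blast
  then have "\<forall>\<^sub>F h in at 0. \<bar>central_difference k (\<lambda>t. norm (x + t *\<^sub>R h) powr p)\<bar> \<le> M * norm h^(2*k)"
    by (simp add: eventually_at_filter eventually_mono)
  from tendsto_zero_divide_norm_powr[OF this assms(2)] show ?thesis .
qed

theorem lemma3p9:
  fixes x :: "'a :: {real_inner, complete_space, second_countable_topology}"
    and p :: real
  assumes "0 < p"
    and "\<not> (\<exists>n::nat. p = 2 * real n)"
  defines "k \<equiv> nat \<lceil>p / 2\<rceil>"
  shows "((\<lambda>h. (\<Sum>j=0..2*k. real (2*k choose j) * (-1) ^ j * norm (x + (real k - real j) *\<^sub>R h) powr p)
              / ((\<Sum>j=0..2*k. real (2*k choose j) * (-1) ^ j * \<bar>real k - real j\<bar> powr p) * norm h powr p))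
          \<longlongrightarrow> (if x = 0 then 1 else 0)) (at 0)"
proof -
  have "1 \<le> k"
    using assms(1) unfolding k_def by linarith
  have "p/2 \<le> real k" "p \<noteq> real (2*k)"
    using assms(2) unfolding k_def by (linarith, auto)
  then have "p < real (2*k)" by simp
  have C: "central_difference k (\<lambda>t. \<bar>t\<bar> powr p) \<noteq> 0"
    using central_difference_abs_powr_neq_0[OF \<open>1 \<le> k\<close>] assms(2) by blast
  have "((\<lambda>h. central_difference k (\<lambda>t. norm (x + t *\<^sub>R h) powr p)
            / (central_difference k (\<lambda>t. \<bar>t\<bar> powr p) * norm h powr p))
          \<longlongrightarrow> (if x = 0 then 1 else 0)) (at 0)"
    using tendsto_central_difference_norm_scaleR_powr_quotient[OF C]
      tendsto_central_difference_norm_powr_quotient[OF _ \<open>p < real (2*k)\<close>]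
    by (cases "x = 0") simp_all
  then show ?thesis
    by (simp add: central_difference_def)
qed

end
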